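(* Let $w$ be a nonnegative weight function on $\mathbb R$ and let $w_1(x)=x^2w(x)$. On $\Omega=\{(x,y):x=0\text{ or }y=0\}$ consider the inner product (on $\mathbb R[x,y]/\langle xy\rangle$) $$\langle f,g\rangle=\int_{\mathbb R}f(x,0)g(x,0)w(x)\,dx+\int_{\mathbb R}f(0,y)g(0,y)w(y)\,dy .$$ Define $$Y_{n,1}(x,y)=p_n(w;x)+p_n(w;y)-p_n(w;0)\ (n\ge0),\qquad Y_{n,2}(x,y)=x\,p_{n-1}(w_1;x)-y\,p_{n-1}(w_1;y)\ (n\ge1).$$ Then for $n\ge1$, $Y_{n,1}$ and $Y_{n,2}$ belong to $\mathcal H_n(\varpi)$ and are mutually orthogonal, and $$\langle Y_{n,1},Y_{n,1}\rangle=2h_n(w),\qquad \langle Y_{n,2},Y_{n,2}\rangle=2h_{n-1}(w_1).$$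
   Context: For a nonnegative weight $v$ (finite moments, infinite support), $p_n(v;\cdot)$ is an orthogonal polynomial of degree $n$ for $v$ (any fixed nonzero normalization) and $h_n(v)=\int p_n(v;t)^2v(t)\,dt$. $\mathcal H_n(\varpi)$ is the space of polynomials $P$ of degree $n$ in two variables with $\langle P,Q\rangle=0$ for all polynomials $Q$ of degree $<n$ and $\langle P,P\rangle>0$, considered modulo the ideal $\langle xy\rangle$. *)

theory Defs
  imports "HOL-Analysis.Analysis" "HOL-Computational_Algebra.Polynomial"
begin

definition weight :: "(real \<Rightarrow> real) \<Rightarrow> bool" where
  "weight v \<longleftrightarrow> (\<forall>t. 0 \<le> v t) \<and> v \<in> borel_measurable lborel \<and>
     (\<forall>k::nat. integrable lborel (\<lambda>t. t ^ k * v t)) \<and>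
     \<not> (\<exists>S. finite S \<and> (AE t in lborel. v t \<noteq> 0 \<longrightarrow> t \<in> S))"

definition is_OP :: "(real \<Rightarrow> real) \<Rightarrow> nat \<Rightarrow> real poly \<Rightarrow> bool" where
  "is_OP v n p \<longleftrightarrow> p \<noteq> 0 \<and> degree p = n \<and>
     (\<forall>q::real poly. degree q < n \<longrightarrow> (\<integral>t. poly p t * poly q t * v t \<partial>lborel) = 0)"

definition hnorm :: "(real \<Rightarrow> real) \<Rightarrow> real poly \<Rightarrow> real" where
  "hnorm v p = (\<integral>t. (poly p t)\<^sup>2 * v t \<partial>lborel)"

text \<open>Bivariate real polynomials, represented by coefficient functions c i j
 (coefficient of x^i y^j) with finite support.\<close>
type_synonym bpoly = "nat \<Rightarrow> nat \<Rightarrow> real"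

definition bsupp :: "bpoly \<Rightarrow> (nat \<times> nat) set" where
  "bsupp c = {(i, j). c i j \<noteq> 0}"

definition is_bpoly :: "bpoly \<Rightarrow> bool" where
  "is_bpoly c \<longleftrightarrow> finite (bsupp c)"

definition beval :: "bpoly \<Rightarrow> real \<Rightarrow> real \<Rightarrow> real" where
  "beval c x y = (\<Sum>(i, j)\<in>bsupp c. c i j * x ^ i * y ^ j)"

text \<open>Total degree (the zero polynomial gets degree 0).\<close>
definition bdeg :: "bpoly \<Rightarrow> nat" where
  "bdeg c = (if bsupp c = {} then 0 else Max ((\<lambda>(i, j). i + j) ` bsupp c))"

text \<open>Congruence modulo the ideal generated by xy: coefficients agree on all
 monomials x^i y^j with i = 0 or j = 0.\<close>
definition bcong_xy :: "bpoly \<Rightarrow> bpoly \<Rightarrow> bool" where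
  "bcong_xy c d \<longleftrightarrow> (\<forall>i j. (i = 0 \<or> j = 0) \<longrightarrow> c i j = d i j)"

definition bip :: "(real \<Rightarrow> real) \<Rightarrow> bpoly \<Rightarrow> bpoly \<Rightarrow> real" where
  "bip w f g = (\<integral>x. beval f x 0 * beval g x 0 * w x \<partial>lborel)
             + (\<integral>y. beval f 0 y * beval g 0 y * w y \<partial>lborel)"

text \<open>The class of P modulo xy lies in H_n: it has a representative of degree n
 orthogonal to all polynomials of degree < n, with positive norm.\<close>
definition in_H :: "(real \<Rightarrow> real) \<Rightarrow> nat \<Rightarrow> bpoly \<Rightarrow> bool" where
  "in_H w n P \<longleftrightarrow> (\<exists>P'. is_bpoly P' \<and> bcong_xy P' P \<and> bdeg P' = n \<and>
      (\<forall>Q. is_bpoly Q \<and> bdeg Q < n \<longrightarrow> bip w P' Q = 0) \<and> bip w P' P' > 0)"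

definition bsum_of :: "real poly \<Rightarrow> real poly \<Rightarrow> bpoly" where
  "bsum_of f g = (\<lambda>i j. (if j = 0 then coeff f i else 0) + (if i = 0 then coeff g j else 0))"

text \<open>Y_{n,1}(x,y) = p(x) + p(y) - p(0).\<close>
definition Y1 :: "real poly \<Rightarrow> bpoly" where
  "Y1 p = bsum_of p (p - [:poly p 0:])"

text \<open>Y_{n,2}(x,y) = x q(x) - y q(y).\<close>
definition Y2 :: "real poly \<Rightarrow> bpoly" where
  "Y2 q = bsum_of (pCons 0 q) (- pCons 0 q)"

end

theory Submission
  imports Defs
begin

text \<open>Restricted to the two axes, a bivariate polynomial of total degree < n is a pair of
 univariate polynomials of degree < n with a common constant term. Y_{n,1} restricts to p_n(w) on
 both axes, so its inner product with such a polynomial is a sum of two vanishing orthogonality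
 integrals. Y_{n,2} restricts to t p_{n-1}(w_1)(t) and its negative, so the inner product is one
 integral of t p_{n-1}(w_1)(t) against the difference of the restrictions; this difference has no
 constant term, hence equals t times a polynomial of degree < n - 1, and orthogonality for
 w_1 = t^2 w applies. The norms are positive because the weights have infinite support.\<close>

lemma poly_sum_atMost:
  fixes p :: "'a::comm_semiring_1 poly"
  assumes "degree p \<le> D"
  shows "poly p x = (\<Sum>i\<le>D. coeff p i * x ^ i)"
proof -
  have "poly p x = (\<Sum>i\<le>degree p. coeff p i * x ^ i)" by (rule poly_altdef)
  also have "\<dots> = (\<Sum>i\<le>D. coeff p i * x ^ i)"
    by (rule sum.mono_neutral_left) (use assms in \<open>auto simp: coeff_eq_0\<close>)
  finally show ?thesis .
qed

lemma bsupp_subset_bdeg_square: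
  assumes "is_bpoly c"
  shows "bsupp c \<subseteq> {..bdeg c} \<times> {..bdeg c}"
proof
  fix z assume z: "z \<in> bsupp c"
  obtain i j where zij: "z = (i, j)" by fastforce
  have "i + j \<le> Max ((\<lambda>(i, j). i + j) ` bsupp c)"
    by (rule Max_ge) (use assms z zij in \<open>auto simp: is_bpoly_def\<close>)
  then show "z \<in> {..bdeg c} \<times> {..bdeg c}" using z zij by (auto simp: bdeg_def)
qed

lemma beval_square:
  assumes "bsupp c \<subseteq> {..D} \<times> {..D}"
  shows "beval c x y = (\<Sum>i\<le>D. \<Sum>j\<le>D. c i j * x ^ i * y ^ j)"
proof -
  have "beval c x y = (\<Sum>(i, j)\<in>{..D} \<times> {..D}. c i j * x ^ i * y ^ j)"
    unfolding beval_def
    by (rule sum.mono_neutral_left) (use assms in \<open>auto simp: bsupp_def\<close>)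
  then show ?thesis by (simp add: sum.cartesian_product)
qed

definition bpoly_xaxis :: "bpoly \<Rightarrow> real poly" where
  "bpoly_xaxis c = (\<Sum>i\<le>bdeg c. monom (c i 0) i)"

definition bpoly_yaxis :: "bpoly \<Rightarrow> real poly" where
  "bpoly_yaxis c = (\<Sum>j\<le>bdeg c. monom (c 0 j) j)"

lemma degree_bpoly_xaxis: "degree (bpoly_xaxis c) \<le> bdeg c"
  unfolding bpoly_xaxis_def
  by (rule degree_sum_le) (auto intro: order_trans[OF degree_monom_le])

lemma degree_bpoly_yaxis: "degree (bpoly_yaxis c) \<le> bdeg c"
  unfolding bpoly_yaxis_def
  by (rule degree_sum_le) (auto intro: order_trans[OF degree_monom_le])

lemma coeff_0_bpoly_axes: "coeff (bpoly_xaxis c) 0 = coeff (bpoly_yaxis c) 0"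
  by (simp add: bpoly_xaxis_def bpoly_yaxis_def coeff_sum coeff_monom)

lemma beval_xaxis:
  assumes "is_bpoly c"
  shows "beval c x 0 = poly (bpoly_xaxis c) x"
proof -
  have "beval c x 0 = (\<Sum>i\<le>bdeg c. \<Sum>j\<le>bdeg c. c i j * x ^ i * 0 ^ j)"
    by (rule beval_square[OF bsupp_subset_bdeg_square[OF assms]])
  also have "\<dots> = (\<Sum>i\<le>bdeg c. \<Sum>j\<le>bdeg c. if j = 0 then c i 0 * x ^ i else 0)"
    by (intro sum.cong refl) (auto simp: power_0_left)
  also have "\<dots> = poly (bpoly_xaxis c) x"
    by (simp add: bpoly_xaxis_def poly_sum poly_monom)
  finally show ?thesis .
qed

lemma beval_yaxis:
  assumes "is_bpoly c"
  shows "beval c 0 y = poly (bpoly_yaxis c) y"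
proof -
  have "beval c 0 y = (\<Sum>i\<le>bdeg c. \<Sum>j\<le>bdeg c. c i j * 0 ^ i * y ^ j)"
    by (rule beval_square[OF bsupp_subset_bdeg_square[OF assms]])
  also have "\<dots> = (\<Sum>i\<le>bdeg c. if i = 0 then (\<Sum>j\<le>bdeg c. c 0 j * y ^ j) else 0)"
    by (rule sum.cong) (auto simp: power_0_left)
  also have "\<dots> = poly (bpoly_yaxis c) y"
    by (simp add: bpoly_yaxis_def poly_sum poly_monom)
  finally show ?thesis .
qed

lemma bip_eq_axis_integrals:
  assumes "is_bpoly Q"
  shows "bip w P Q = (\<integral>x. beval P x 0 * poly (bpoly_xaxis Q) x * w x \<partial>lborel)
                   + (\<integral>y. beval P 0 y * poly (bpoly_yaxis Q) y * w y \<partial>lborel)"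
  by (simp add: bip_def beval_xaxis[OF assms] beval_yaxis[OF assms])

lemma in_H_selfI:
  assumes "is_bpoly P" "bdeg P = n"
    and "\<And>Q. is_bpoly Q \<Longrightarrow> bdeg Q < n \<Longrightarrow> bip w P Q = 0"
    and "bip w P P > 0"
  shows "in_H w n P"
  unfolding in_H_def using assms by (auto simp: bcong_xy_def)

lemma bsupp_bsum_of:
  "bsupp (bsum_of f g) \<subseteq> {(i, 0) | i. i \<le> degree f} \<union> {(0, j) | j. j \<le> degree g}"
proof
  fix z assume z: "z \<in> bsupp (bsum_of f g)"
  obtain i j where zij: "z = (i, j)" by fastforce
  have "bsum_of f g i j \<noteq> 0" using z zij by (auto simp: bsupp_def)
  then show "z \<in> {(i, 0) | i. i \<le> degree f} \<union> {(0, j) | j. j \<le> degree g}"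
    using zij by (cases "i = 0 \<and> j = 0")
      (auto simp: bsum_of_def intro: le_degree split: if_splits)
qed

lemma is_bpoly_bsum_of: "is_bpoly (bsum_of f g)"
  unfolding is_bpoly_def by (rule finite_subset[OF bsupp_bsum_of]) auto

lemma beval_bsum_of: "beval (bsum_of f g) x y = poly f x + poly g y"
proof -
  let ?D = "max (degree f) (degree g)"
  have "beval (bsum_of f g) x y = (\<Sum>i\<le>?D. \<Sum>j\<le>?D. bsum_of f g i j * x ^ i * y ^ j)"
    by (rule beval_square) (use bsupp_bsum_of[of f g] in auto)
  also have "\<dots> = (\<Sum>i\<le>?D. \<Sum>j\<le>?D. (if j = 0 then coeff f i * x ^ i else 0)
                                   + (if i = 0 then coeff g j * y ^ j else 0))"
    by (intro sum.cong refl) (auto simp: bsum_of_def algebra_simps)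
  also have "\<dots> = (\<Sum>i\<le>?D. coeff f i * x ^ i) + (\<Sum>j\<le>?D. coeff g j * y ^ j)"
    by (simp add: sum.distrib sum.delta) (subst sum.swap, simp add: sum.delta)
  also have "\<dots> = poly f x + poly g y"
    using poly_sum_atMost[of f ?D x] poly_sum_atMost[of g ?D y] by simp
  finally show ?thesis .
qed

lemma bdeg_bsum_of:
  assumes "degree g \<le> degree f"
  shows "bdeg (bsum_of f g) = degree f"
proof -
  let ?S = "bsupp (bsum_of f g)"
  have bound: "i + j \<le> degree f" if "(i, j) \<in> ?S" for i j
    using subsetD[OF bsupp_bsum_of that] assms by auto
  show ?thesis
  proof (cases "degree f = 0")
    case True
    with bound have "(\<lambda>(i, j). i + j) ` ?S \<subseteq> {0}" by auto
    then show ?thesis using True by (auto simp: bdeg_def subset_singleton_iff)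
  next
    case False
    then have top: "(degree f, 0) \<in> ?S"
      by (auto simp: bsupp_def bsum_of_def)
    have "Max ((\<lambda>(i, j). i + j) ` ?S) = degree f"
    proof (rule Max_eqI)
      show "finite ((\<lambda>(i, j). i + j) ` ?S)"
        using is_bpoly_bsum_of[of f g] by (simp add: is_bpoly_def)
      show "degree f \<in> (\<lambda>(i, j). i + j) ` ?S" using top by force
    qed (use bound in auto)
    then show ?thesis using top by (auto simp: bdeg_def)
  qed
qed

lemma Y1_on_axes: "beval (Y1 p) x 0 = poly p x" "beval (Y1 p) 0 y = poly p y"
  by (auto simp: Y1_def beval_bsum_of)

lemma Y2_on_axes: "beval (Y2 q) x 0 = x * poly q x" "beval (Y2 q) 0 y = - (y * poly q y)"
  by (auto simp: Y2_def beval_bsum_of)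

lemma is_bpoly_Y1: "is_bpoly (Y1 p)"
  by (simp add: Y1_def is_bpoly_bsum_of)

lemma is_bpoly_Y2: "is_bpoly (Y2 q)"
  by (simp add: Y2_def is_bpoly_bsum_of)

lemma bdeg_Y1: "bdeg (Y1 p) = degree p"
  unfolding Y1_def by (rule bdeg_bsum_of) (auto intro: degree_diff_le)

lemma bdeg_Y2:
  assumes "q \<noteq> 0"
  shows "bdeg (Y2 q) = Suc (degree q)"
  using assms unfolding Y2_def by (subst bdeg_bsum_of) auto

lemma weight_integrable_poly:
  assumes "weight w"
  shows "integrable lborel (\<lambda>t. poly r t * w t)"
proof -
  have "(\<lambda>t. poly r t * w t) = (\<lambda>t. \<Sum>i\<le>degree r. coeff r i * (t ^ i * w t))"
    by (auto simp: poly_altdef sum_distrib_right mult.assoc)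
  moreover have "integrable lborel (\<lambda>t. \<Sum>i\<le>degree r. coeff r i * (t ^ i * w t))"
    using assms by (auto simp: weight_def)
  ultimately show ?thesis by simp
qed

lemma weight_mult_square:
  assumes "weight w"
  shows "weight (\<lambda>t. t\<^sup>2 * w t)"
proof -
  have "integrable lborel (\<lambda>t. t ^ k * (t\<^sup>2 * w t))" for k :: nat
  proof -
    have "(\<lambda>t::real. t ^ k * (t\<^sup>2 * w t)) = (\<lambda>t. t ^ (k + 2) * w t)"
      by (simp add: power_add power2_eq_square algebra_simps)
    then show ?thesis using assms unfolding weight_def by metis
  qed
  moreover have "\<not> (\<exists>S. finite S \<and> (AE t in lborel. t\<^sup>2 * w t \<noteq> 0 \<longrightarrow> t \<in> S))"
  proof
    assume "\<exists>S. finite S \<and> (AE t in lborel. t\<^sup>2 * w t \<noteq> 0 \<longrightarrow> t \<in> S)"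
    then obtain S where S: "finite S" "AE t in lborel. t\<^sup>2 * w t \<noteq> 0 \<longrightarrow> t \<in> S" by blast
    have "AE t in lborel. w t \<noteq> 0 \<longrightarrow> t \<in> insert 0 S"
      using S(2) by eventually_elim auto
    then show False using assms S(1) unfolding weight_def by blast
  qed
  ultimately show ?thesis using assms unfolding weight_def by auto
qed

lemma hnorm_pos:
  assumes "weight w" "r \<noteq> 0"
  shows "hnorm w r > 0"
proof -
  have int: "integrable lborel (\<lambda>t. (poly r t)\<^sup>2 * w t)"
    using weight_integrable_poly[OF assms(1), of "r * r"] by (simp add: power2_eq_square)
  have nonneg: "0 \<le> (poly r t)\<^sup>2 * w t" for t
    using assms(1) by (auto simp: weight_def)
  have "hnorm w r \<noteq> 0"
  proof
    assume "hnorm w r = 0"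
    then have "AE t in lborel. (poly r t)\<^sup>2 * w t = 0"
      using integral_nonneg_eq_0_iff_AE[OF int] nonneg unfolding hnorm_def by auto
    then have "AE t in lborel. w t \<noteq> 0 \<longrightarrow> t \<in> {t. poly r t = 0}"
      by eventually_elim auto
    with poly_roots_finite[OF assms(2)] assms(1) show False
      unfolding weight_def by blast
  qed
  moreover have "hnorm w r \<ge> 0"
    unfolding hnorm_def by (rule integral_nonneg_AE) (use nonneg in auto)
  ultimately show ?thesis by simp
qed

lemma is_OP_mult_square_orthogonal:
  assumes "is_OP (\<lambda>t. t\<^sup>2 * w t) m q" "degree d \<le> m" "poly d 0 = 0"
  shows "(\<integral>t. t * poly q t * poly d t * w t \<partial>lborel) = 0"
proof -
  obtain s where d: "d = pCons 0 s"
    using assms(3) by (cases d) (auto simp: poly_0_coeff_0)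
  show ?thesis
  proof (cases "s = 0")
    case False
    then have "degree s < m" using assms(2) d by simp
    then have "(\<integral>t. poly q t * poly s t * (t\<^sup>2 * w t) \<partial>lborel) = 0"
      using assms(1) by (simp add: is_OP_def)
    then show ?thesis by (simp add: d power2_eq_square algebra_simps)
  qed (simp add: d)
qed

lemma bip_Y1_lower_degree:
  assumes "is_OP w n p" "is_bpoly Q" "bdeg Q < n"
  shows "bip w (Y1 p) Q = 0"
proof -
  have "degree (bpoly_xaxis Q) < n" "degree (bpoly_yaxis Q) < n"
    using degree_bpoly_xaxis[of Q] degree_bpoly_yaxis[of Q] assms(3) by auto
  then show ?thesis
    using assms(1) by (simp add: bip_eq_axis_integrals[OF assms(2)] Y1_on_axes is_OP_def)
qed

lemma bip_Y2_lower_degree: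
  assumes "weight w" "is_OP (\<lambda>t. t\<^sup>2 * w t) (n - 1) q" "is_bpoly Q" "bdeg Q < n"
  shows "bip w (Y2 q) Q = 0"
proof -
  define r1 r2 where "r1 = bpoly_xaxis Q" and "r2 = bpoly_yaxis Q"
  have int: "integrable lborel (\<lambda>t. t * poly q t * poly r t * w t)" for r
    using weight_integrable_poly[OF assms(1), of "pCons 0 q * r"] by (simp add: algebra_simps)
  have "degree (r1 - r2) \<le> n - 1"
    using degree_bpoly_xaxis[of Q] degree_bpoly_yaxis[of Q] assms(4)
    unfolding r1_def r2_def by (intro degree_diff_le) auto
  moreover have "poly (r1 - r2) 0 = 0"
    by (simp add: r1_def r2_def poly_0_coeff_0 coeff_0_bpoly_axes)
  ultimately have orth: "(\<integral>t. t * poly q t * poly (r1 - r2) t * w t \<partial>lborel) = 0"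
    by (rule is_OP_mult_square_orthogonal[OF assms(2)])
  have "bip w (Y2 q) Q = (\<integral>t. t * poly q t * poly r1 t * w t \<partial>lborel)
                       - (\<integral>t. t * poly q t * poly r2 t * w t \<partial>lborel)"
    by (simp add: bip_eq_axis_integrals[OF assms(3)] Y2_on_axes r1_def r2_def)
  also have "\<dots> = (\<integral>t. t * poly q t * poly r1 t * w t - t * poly q t * poly r2 t * w t \<partial>lborel)"
    by (rule Bochner_Integration.integral_diff[OF int int, symmetric])
  also have "\<dots> = (\<integral>t. t * poly q t * poly (r1 - r2) t * w t \<partial>lborel)"
    by (simp add: algebra_simps)
  finally show ?thesis using orth by simp
qed

lemma bip_Y1_Y1: "bip w (Y1 p) (Y1 p) = 2 * hnorm w p"
  by (simp add: bip_def Y1_on_axes hnorm_def power2_eq_square)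

lemma bip_Y2_Y2: "bip w (Y2 q) (Y2 q) = 2 * hnorm (\<lambda>t. t\<^sup>2 * w t) q"
  by (simp add: bip_def Y2_on_axes hnorm_def power2_eq_square algebra_simps)

lemma bip_Y1_Y2: "bip w (Y1 p) (Y2 q) = 0"
  by (simp add: bip_def Y1_on_axes Y2_on_axes)

theorem theorem6p1:
  fixes w :: "real \<Rightarrow> real" and n :: nat and p q :: "real poly"
  assumes "weight w"
    and "n \<ge> 1"
    and "is_OP w n p"
    and "is_OP (\<lambda>t. t\<^sup>2 * w t) (n - 1) q"
  shows "in_H w n (Y1 p) \<and> in_H w n (Y2 q) \<and> bip w (Y1 p) (Y2 q) = 0 \<and>
         bip w (Y1 p) (Y1 p) = 2 * hnorm w p \<and>
         bip w (Y2 q) (Y2 q) = 2 * hnorm (\<lambda>t. t\<^sup>2 * w t) q"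
proof -
  have p: "p \<noteq> 0" "degree p = n" and q: "q \<noteq> 0" "Suc (degree q) = n"
    using assms(2-4) by (auto simp: is_OP_def)
  have "in_H w n (Y1 p)"
    using is_bpoly_Y1 bdeg_Y1 bip_Y1_lower_degree[OF assms(3)] bip_Y1_Y1
      hnorm_pos[OF assms(1) p(1)] p(2)
    by (intro in_H_selfI) auto
  moreover have "in_H w n (Y2 q)"
    using is_bpoly_Y2 bdeg_Y2[OF q(1)] bip_Y2_lower_degree[OF assms(1,4)] bip_Y2_Y2
      hnorm_pos[OF weight_mult_square[OF assms(1)] q(1)] q(2)
    by (intro in_H_selfI) auto
  ultimately show ?thesis using bip_Y1_Y2 bip_Y1_Y1 bip_Y2_Y2 by simp
qed

end
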